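(* Let $(\mathsf X_1,\mathsf X_2)\sim p(x_1,x_2)$ be a pair of random variables on finite alphabets and let \[ M_1=\max_{\mathsf X_1-\mathsf U-\mathsf X_2}\tfrac12\min\{H(\mathsf X_1|\mathsf U),H(\mathsf X_2|\mathsf U)\}, \] the maximum being over auxiliary random variables $\mathsf U$ (given by $p(u|x_1,x_2)$) such that $\mathsf X_1-\mathsf U-\mathsf X_2$ is a Markov chain. Then for every $M\in[0,M_1]\cup[H(\mathsf X_1,\mathsf X_2)-2M_1,\,H(\mathsf X_1,\mathsf X_2)]$ we have $R^{LB}_{GW}(M)=R^{LB}(M)$, where \[ R^{LB}(M)=\inf\Big\{R:\; R\ge H(\mathsf X_1,\mathsf X_2)-2M,\; R\ge \tfrac12\big(H(\mathsf X_1,\mathsf X_2)-M\big),\; R\ge \tfrac12\big(H(\mathsf X_1,\mathsf X_2)+\max\{H(\mathsf X_1),H(\mathsf X_2)\}\big)-M\Big\}, \] and $R^{LB}_{GW}(M)=\inf_{\mathsf U}R^{LB}_{GW}(M,\mathsf U)$, the infimum over all conditional pmfs $p(u|x_1,x_2)$ with $|\mathcal U|\le|\mathcal X_1|\cdot|\mathcal X_2|+2$, with \[ \begin{aligned} R^{LB}_{GW}(M,\mathsf U)=\inf\Big\{R:\;& R\ge I(\mathsf X_1,\mathsf X_2;\mathsf U)+H(\mathsf X_1|\mathsf U)+H(\mathsf X_2|\mathsf U)-2M,\\ & R\ge \tfrac12\big(I(\mathsf X_1,\mathsf X_2;\mathsf U)+H(\mathsf X_1|\mathsf U)+H(\mathsf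 X_2|\mathsf U)-M\big),\\ & R\ge I(\mathsf X_1,\mathsf X_2;\mathsf U)+H(\mathsf X_1|\mathsf U)+\tfrac12H(\mathsf X_2|\mathsf U)-M,\\ & R\ge I(\mathsf X_1,\mathsf X_2;\mathsf U)+\tfrac12H(\mathsf X_1|\mathsf U)+H(\mathsf X_2|\mathsf U)-M\Big\}. \end{aligned} \]
   Context: $R^{LB}(M)$ is a lower bound on the optimal peak rate-memory function of a two-receiver, two-file broadcast caching network with files generated by the 2-DMS $(\mathsf X_1,\mathsf X_2)$ and per-receiver (normalized) cache capacity $M$, and $R^{LB}_{GW}(M)$ is a lower bound on the corresponding function restricted to Gray-Wyner based two-step schemes; for the statement only their explicit formulas above matter. Entropies and mutual information are the standard Shannon quantities. *)

theory Defs
  imports Complex_Main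
begin

definition ent :: "('c \<Rightarrow> real) \<Rightarrow> 'c set \<Rightarrow> real" where
  "ent f S = - (\<Sum>s\<in>S. (if f s = 0 then 0 else f s * log 2 (f s)))"

definition is_pmf2 :: "('a::finite \<times> 'b::finite \<Rightarrow> real) \<Rightarrow> bool" where
  "is_pmf2 p \<longleftrightarrow> (\<forall>z. 0 \<le> p z) \<and> (\<Sum>z\<in>UNIV. p z) = 1"

definition is_cond_pmf :: "nat \<Rightarrow> ('a \<Rightarrow> 'b \<Rightarrow> nat \<Rightarrow> real) \<Rightarrow> bool" where
  "is_cond_pmf K q \<longleftrightarrow> (\<forall>x1 x2 u. 0 \<le> q x1 x2 u) \<and>
     (\<forall>x1 x2. (\<Sum>u<K. q x1 x2 u) = 1)"

definition pJ :: "('a \<times> 'b \<Rightarrow> real) \<Rightarrow> ('a \<Rightarrow> 'b \<Rightarrow> nat \<Rightarrow> real) \<Rightarrow> 'a \<times> 'b \<times> nat \<Rightarrow> real" where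
  "pJ p q = (\<lambda>(x1, x2, u). p (x1, x2) * q x1 x2 u)"

definition pX1 :: "('a \<times> 'b::finite \<Rightarrow> real) \<Rightarrow> 'a \<Rightarrow> real" where
  "pX1 p x1 = (\<Sum>x2\<in>UNIV. p (x1, x2))"

definition pX2 :: "('a::finite \<times> 'b \<Rightarrow> real) \<Rightarrow> 'b \<Rightarrow> real" where
  "pX2 p x2 = (\<Sum>x1\<in>UNIV. p (x1, x2))"

definition pU :: "('a::finite \<times> 'b::finite \<Rightarrow> real) \<Rightarrow> ('a \<Rightarrow> 'b \<Rightarrow> nat \<Rightarrow> real) \<Rightarrow> nat \<Rightarrow> real" where
  "pU p q u = (\<Sum>x1\<in>UNIV. \<Sum>x2\<in>UNIV. pJ p q (x1, x2, u))"

definition pX1U :: "('a \<times> 'b::finite \<Rightarrow> real) \<Rightarrow> ('a \<Rightarrow> 'b \<Rightarrow> nat \<Rightarrow> real) \<Rightarrow> 'a \<times> nat \<Rightarrow> real" where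
  "pX1U p q = (\<lambda>(x1, u). \<Sum>x2\<in>UNIV. pJ p q (x1, x2, u))"

definition pX2U :: "('a::finite \<times> 'b \<Rightarrow> real) \<Rightarrow> ('a \<Rightarrow> 'b \<Rightarrow> nat \<Rightarrow> real) \<Rightarrow> 'b \<times> nat \<Rightarrow> real" where
  "pX2U p q = (\<lambda>(x2, u). \<Sum>x1\<in>UNIV. pJ p q (x1, x2, u))"

definition H12 :: "('a::finite \<times> 'b::finite \<Rightarrow> real) \<Rightarrow> real" where
  "H12 p = ent p UNIV"
definition H1 :: "('a::finite \<times> 'b::finite \<Rightarrow> real) \<Rightarrow> real" where
  "H1 p = ent (pX1 p) UNIV"
definition H2 :: "('a::finite \<times> 'b::finite \<Rightarrow> real) \<Rightarrow> real" where
  "H2 p = ent (pX2 p) UNIV"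

definition HU :: "('a::finite \<times> 'b::finite \<Rightarrow> real) \<Rightarrow> nat \<Rightarrow> ('a \<Rightarrow> 'b \<Rightarrow> nat \<Rightarrow> real) \<Rightarrow> real" where
  "HU p K q = ent (pU p q) {..<K}"
definition H12U :: "('a::finite \<times> 'b::finite \<Rightarrow> real) \<Rightarrow> nat \<Rightarrow> ('a \<Rightarrow> 'b \<Rightarrow> nat \<Rightarrow> real) \<Rightarrow> real" where
  "H12U p K q = ent (pJ p q) (UNIV \<times> UNIV \<times> {..<K})"

definition H1_given_U :: "('a::finite \<times> 'b::finite \<Rightarrow> real) \<Rightarrow> nat \<Rightarrow> ('a \<Rightarrow> 'b \<Rightarrow> nat \<Rightarrow> real) \<Rightarrow> real" where
  "H1_given_U p K q = ent (pX1U p q) (UNIV \<times> {..<K}) - HU p K q"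
definition H2_given_U :: "('a::finite \<times> 'b::finite \<Rightarrow> real) \<Rightarrow> nat \<Rightarrow> ('a \<Rightarrow> 'b \<Rightarrow> nat \<Rightarrow> real) \<Rightarrow> real" where
  "H2_given_U p K q = ent (pX2U p q) (UNIV \<times> {..<K}) - HU p K q"
definition I12_U :: "('a::finite \<times> 'b::finite \<Rightarrow> real) \<Rightarrow> nat \<Rightarrow> ('a \<Rightarrow> 'b \<Rightarrow> nat \<Rightarrow> real) \<Rightarrow> real" where
  "I12_U p K q = H12 p + HU p K q - H12U p K q"

definition markov :: "('a::finite \<times> 'b::finite \<Rightarrow> real) \<Rightarrow> nat \<Rightarrow> ('a \<Rightarrow> 'b \<Rightarrow> nat \<Rightarrow> real) \<Rightarrow> bool" where
  "markov p K q \<longleftrightarrow> (\<forall>x1 x2. \<forall>u<K.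
      pJ p q (x1, x2, u) * pU p q u = pX1U p q (x1, u) * pX2U p q (x2, u))"

definition M1 :: "('a::finite \<times> 'b::finite \<Rightarrow> real) \<Rightarrow> real" where
  "M1 p = Sup {min (H1_given_U p K q) (H2_given_U p K q) / 2 | K q.
                  is_cond_pmf K q \<and> markov p K q}"

definition R_LB :: "('a::finite \<times> 'b::finite \<Rightarrow> real) \<Rightarrow> real \<Rightarrow> real" where
  "R_LB p M = Inf {R. R \<ge> H12 p - 2 * M \<and> R \<ge> (H12 p - M) / 2 \<and>
                      R \<ge> (H12 p + max (H1 p) (H2 p)) / 2 - M}"

definition R_GW_U :: "('a::finite \<times> 'b::finite \<Rightarrow> real) \<Rightarrow> real \<Rightarrow> nat \<Rightarrow> ('a \<Rightarrow> 'b \<Rightarrow> nat \<Rightarrow> real) \<Rightarrow> real" where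
  "R_GW_U p M K q = (let I = I12_U p K q; A = H1_given_U p K q; B = H2_given_U p K q in
     Inf {R. R \<ge> I + A + B - 2 * M \<and> R \<ge> (I + A + B - M) / 2 \<and>
             R \<ge> I + A + B / 2 - M \<and> R \<ge> I + A / 2 + B - M})"

definition R_GW :: "('a::finite \<times> 'b::finite \<Rightarrow> real) \<Rightarrow> real \<Rightarrow> real" where
  "R_GW p M = Inf {R_GW_U p M K q | K q.
      is_cond_pmf K q \<and> K \<le> card (UNIV::'a set) * card (UNIV::'b set) + 2}"

end

theory Submission
  imports Defs "HOL-Analysis.Analysis"
begin

text \<open>
  Both rate functions are maxima of finitely many affine functions of M. The Shannon inequalities
  H(X1,X2) \<le> I(X1,X2;U) + H(X1|U) + H(X2|U) and H(Xi) \<le> I(X1,X2;U) + H(Xi|U) give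
  R_LB(M) \<le> R_GW(M,U) for every U. Conversely, if X1 - U - X2 then
  I(X1,X2;U) + H(X1|U) + H(X2|U) = H(X1,X2), so that
  R_GW(M,U) = max {H(X1,X2) - 2M, (H(X1,X2) - M)/2, H(X1,X2) - m - M} with
  m = min {H(X1|U), H(X2|U)}/2. Letting m approach M1, the last term is dominated by one of the
  first two precisely when M \<le> M1 or M \<ge> H(X1,X2) - 2 M1. A Markov U amounts to writing p as a
  mixture of product pmfs, and Carath\'eodory's theorem shrinks the mixture to at most
  |X1| |X2| + 2 components without changing p or the conditional entropies.
\<close>

definition plogp :: "real \<Rightarrow> real" where
  "plogp t = t * ln t"

lemma ent_plogp: "ent f S = - (\<Sum>s\<in>S. plogp (f s)) / ln 2"
proof -
  have "(\<Sum>s\<in>S. if f s = 0 then 0 else f s * log 2 (f s)) = (\<Sum>s\<in>S. plogp (f s) / ln 2)"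
    by (intro sum.cong) (auto simp: log_def plogp_def)
  then show ?thesis
    unfolding ent_def by (simp add: sum_divide_distrib)
qed

lemma plogp_mult: "0 \<le> x \<Longrightarrow> 0 \<le> y \<Longrightarrow> plogp (x * y) = y * plogp x + x * plogp y"
  unfolding plogp_def by (cases "x = 0"; cases "y = 0") (auto simp: ln_mult algebra_simps)

lemma ent_cong: "(\<And>s. s \<in> S \<Longrightarrow> f s = g s) \<Longrightarrow> ent f S = ent g S"
  unfolding ent_def by (intro arg_cong[where f = uminus] sum.cong) auto

lemma ent_reindex_bij_betw:
  assumes "bij_betw h S T" and "\<And>s. s \<in> S \<Longrightarrow> g s = f (h s)"
  shows "ent g S = ent f T"
proof -
  have "ent g S = ent (\<lambda>s. f (h s)) S"
    using assms(2) by (intro ent_cong) simp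
  also have "\<dots> = ent f T"
    unfolding ent_def
    using sum.reindex_bij_betw[OF assms(1), of "\<lambda>t. if f t = 0 then 0 else f t * log 2 (f t)"]
    by simp
  finally show ?thesis .
qed

lemma ent_chain_rule:
  assumes w: "\<And>j. j \<in> J \<Longrightarrow> 0 \<le> w j"
    and a: "\<And>j x. j \<in> J \<Longrightarrow> x \<in> X \<Longrightarrow> 0 \<le> a j x"
    and sa: "\<And>j. j \<in> J \<Longrightarrow> sum (a j) X = 1"
  shows "ent (\<lambda>(x, j). w j * a j x) (X \<times> J) = ent w J + (\<Sum>j\<in>J. w j * ent (a j) X)"
proof -
  have "(\<Sum>(x, j)\<in>X \<times> J. plogp (w j * a j x))
      = (\<Sum>j\<in>J. \<Sum>x\<in>X. a j x * plogp (w j) + w j * plogp (a j x))"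
    by (subst sum.cartesian_product[symmetric], subst sum.swap)
       (auto intro!: sum.cong simp: plogp_mult w a)
  also have "\<dots> = (\<Sum>j\<in>J. plogp (w j) + w j * (\<Sum>x\<in>X. plogp (a j x)))"
    by (intro sum.cong refl)
       (simp add: sum.distrib sum_distrib_left[symmetric] sum_distrib_right[symmetric] sa)
  finally show ?thesis
    unfolding ent_plogp
    by (simp add: case_prod_beta sum.distrib sum_distrib_left diff_divide_distrib
        add_divide_distrib sum_divide_distrib[symmetric] sum_negf)
qed

lemma plogp_ratio_bound:
  fixes r s t z :: real
  assumes "0 \<le> r" "r \<le> s" "r \<le> t" "s \<le> z"
  shows "r - s * t / z \<le> r * (ln r + ln z - ln s - ln t)"
proof (cases "r = 0")
  case True
  with assms show ?thesis by simp
next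
  case False
  with assms have pos: "0 < r" "0 < s" "0 < t" "0 < z" by linarith+
  define \<rho> where "\<rho> = s * t / (r * z)"
  have "ln \<rho> \<le> \<rho> - 1"
    using pos unfolding \<rho>_def by (intro ln_le_minus_one) simp
  also have "ln \<rho> = ln s + ln t - ln r - ln z"
    using pos unfolding \<rho>_def by (simp add: ln_div ln_mult)
  finally have "r * (1 - \<rho>) \<le> r * (ln r + ln z - ln s - ln t)"
    using pos by (intro mult_left_mono) auto
  also have "r * (1 - \<rho>) = r - s * t / z"
    using pos unfolding \<rho>_def by (simp add: field_simps)
  finally show ?thesis .
qed

lemma cond_mutual_info_nonneg:
  fixes r :: "'x \<times> 'y \<times> 'z \<Rightarrow> real"
  assumes X: "finite X" and Y: "finite Y" and r: "\<And>x y z. 0 \<le> r (x, y, z)"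
  defines "rXZ \<equiv> \<lambda>x z. \<Sum>y\<in>Y. r (x, y, z)" and "rYZ \<equiv> \<lambda>y z. \<Sum>x\<in>X. r (x, y, z)"
    and "rZ \<equiv> \<lambda>z. \<Sum>x\<in>X. \<Sum>y\<in>Y. r (x, y, z)"
  shows "0 \<le> (\<Sum>x\<in>X. \<Sum>y\<in>Y. \<Sum>z\<in>Z. r (x, y, z) * (ln (r (x, y, z)) + ln (rZ z) - ln (rXZ x z) - ln (rYZ y z)))"
proof -
  have le: "r (x, y, z) \<le> rXZ x z" "r (x, y, z) \<le> rYZ y z" "rXZ x z \<le> rZ z"
    if "x \<in> X" "y \<in> Y" for x y z
    unfolding rXZ_def rYZ_def rZ_def using that X Y r
    by (auto intro!: member_le_sum[of _ _ "\<lambda>x. \<Sum>y\<in>Y. r (x, y, z)"] member_le_sum sum_nonneg)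
  have "(\<Sum>x\<in>X. \<Sum>y\<in>Y. \<Sum>z\<in>Z. rXZ x z * rYZ y z / rZ z)
      = (\<Sum>z\<in>Z. (\<Sum>x\<in>X. rXZ x z) * (\<Sum>y\<in>Y. rYZ y z) / rZ z)"
    by (simp add: sum_product sum_divide_distrib sum.swap[of _ X Z] sum.swap[of _ Y Z])
  also have "\<dots> = (\<Sum>z\<in>Z. rZ z)"
    unfolding rXZ_def rYZ_def rZ_def by (intro sum.cong refl) (simp add: sum.swap[of _ Y X])
  also have "\<dots> = (\<Sum>x\<in>X. \<Sum>y\<in>Y. \<Sum>z\<in>Z. r (x, y, z))"
    unfolding rZ_def by (simp add: sum.swap[of _ Z X] sum.swap[of _ Z Y])
  finally have "0 = (\<Sum>x\<in>X. \<Sum>y\<in>Y. \<Sum>z\<in>Z. r (x, y, z) - rXZ x z * rYZ y z / rZ z)"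
    by (simp add: sum_subtractf)
  also have "\<dots> \<le> (\<Sum>x\<in>X. \<Sum>y\<in>Y. \<Sum>z\<in>Z. r (x, y, z) * (ln (r (x, y, z)) + ln (rZ z) - ln (rXZ x z) - ln (rYZ y z)))"
    using le by (intro sum_mono plogp_ratio_bound) (auto intro: r)
  finally show ?thesis .
qed

lemma ent_submodular:
  fixes r :: "'x \<times> 'y \<times> 'z \<Rightarrow> real"
  assumes X: "finite X" and Y: "finite Y" and r: "\<And>x y z. 0 \<le> r (x, y, z)"
  shows "ent r (X \<times> Y \<times> Z) + ent (\<lambda>z. \<Sum>x\<in>X. \<Sum>y\<in>Y. r (x, y, z)) Z
     \<le> ent (\<lambda>(x, z). \<Sum>y\<in>Y. r (x, y, z)) (X \<times> Z) + ent (\<lambda>(y, z). \<Sum>x\<in>X. r (x, y, z)) (Y \<times> Z)"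
proof -
  define rXZ where "rXZ = (\<lambda>x z. \<Sum>y\<in>Y. r (x, y, z))"
  define rYZ where "rYZ = (\<lambda>y z. \<Sum>x\<in>X. r (x, y, z))"
  define rZ where "rZ = (\<lambda>z. \<Sum>x\<in>X. \<Sum>y\<in>Y. r (x, y, z))"
  define S where "S g = (\<Sum>x\<in>X. \<Sum>y\<in>Y. \<Sum>z\<in>Z. r (x, y, z) * g x y z)" for g
  have "0 \<le> S (\<lambda>x y z. ln (r (x, y, z)) + ln (rZ z) - ln (rXZ x z) - ln (rYZ y z))"
    unfolding S_def rXZ_def rYZ_def rZ_def using X Y r by (rule cond_mutual_info_nonneg)
  also have "\<dots> = S (\<lambda>x y z. ln (r (x, y, z))) + S (\<lambda>x y z. ln (rZ z))
      - S (\<lambda>x y z. ln (rXZ x z)) - S (\<lambda>x y z. ln (rYZ y z))"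
    unfolding S_def by (simp add: algebra_simps sum.distrib sum_subtractf)
  also have "S (\<lambda>x y z. ln (r (x, y, z))) = (\<Sum>s\<in>X \<times> Y \<times> Z. plogp (r s))"
    unfolding S_def plogp_def by (simp add: sum.cartesian_product)
  also have "S (\<lambda>x y z. ln (rZ z)) = (\<Sum>z\<in>Z. plogp (rZ z))"
    unfolding S_def plogp_def rZ_def sum_distrib_right
    by (simp add: sum.swap[of _ Z X] sum.swap[of _ Z Y])
  also have "S (\<lambda>x y z. ln (rXZ x z)) = (\<Sum>(x, z)\<in>X \<times> Z. plogp (rXZ x z))"
    unfolding S_def plogp_def rXZ_def sum_distrib_right sum.cartesian_product[symmetric]
    by (simp add: sum.swap[of _ Z Y])
  also have "S (\<lambda>x y z. ln (rYZ y z)) = (\<Sum>(y, z)\<in>Y \<times> Z. plogp (rYZ y z))"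
    unfolding S_def plogp_def rYZ_def sum_distrib_right sum.cartesian_product[symmetric]
    by (simp add: sum.swap[of _ Z X] sum.swap[of _ Y X])
  finally have "((\<Sum>(x, z)\<in>X \<times> Z. plogp (rXZ x z)) + (\<Sum>(y, z)\<in>Y \<times> Z. plogp (rYZ y z))) / ln 2
      \<le> ((\<Sum>s\<in>X \<times> Y \<times> Z. plogp (r s)) + (\<Sum>z\<in>Z. plogp (rZ z))) / ln 2"
    by (intro divide_right_mono) simp_all
  then show ?thesis
    unfolding ent_plogp rXZ_def rYZ_def rZ_def add_divide_distrib
    by (simp add: case_prod_unfold)
qed

lemma pJ_nonneg: "is_pmf2 p \<Longrightarrow> is_cond_pmf K q \<Longrightarrow> 0 \<le> pJ p q s"
  unfolding is_pmf2_def is_cond_pmf_def pJ_def by (auto split: prod.splits)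

lemma sum_pJ_U: "is_cond_pmf K q \<Longrightarrow> (\<Sum>u<K. pJ p q (x1, x2, u)) = p (x1, x2)"
  unfolding is_cond_pmf_def pJ_def by (simp add: sum_distrib_left[symmetric])

lemma H12_le_I12_U_add_given_U:
  assumes "is_pmf2 p" "is_cond_pmf K q"
  shows "H12 p \<le> I12_U p K q + H1_given_U p K q + H2_given_U p K q"
proof -
  have "ent (pJ p q) (UNIV \<times> UNIV \<times> {..<K}) + ent (\<lambda>u. \<Sum>x1\<in>UNIV. \<Sum>x2\<in>UNIV. pJ p q (x1, x2, u)) {..<K}
     \<le> ent (\<lambda>(x1, u). \<Sum>x2\<in>UNIV. pJ p q (x1, x2, u)) (UNIV \<times> {..<K})
      + ent (\<lambda>(x2, u). \<Sum>x1\<in>UNIV. pJ p q (x1, x2, u)) (UNIV \<times> {..<K})"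
    by (rule ent_submodular) (auto intro: pJ_nonneg[OF assms])
  then show ?thesis
    unfolding I12_U_def H1_given_U_def H2_given_U_def H12U_def HU_def pU_def pX1U_def pX2U_def
    by (simp add: case_prod_beta')
qed

lemma H1_le_I12_U_add_H1_given_U:
  assumes "is_pmf2 p" "is_cond_pmf K q"
  shows "H1 p \<le> I12_U p K q + H1_given_U p K q"
proof -
  define r where "r = (\<lambda>(u, x2, x1). pJ p q (x1, x2, u))"
  have "ent r ({..<K} \<times> UNIV \<times> UNIV) + ent (\<lambda>x1. \<Sum>u<K. \<Sum>x2\<in>UNIV. r (u, x2, x1)) UNIV
     \<le> ent (\<lambda>(u, x1). \<Sum>x2\<in>UNIV. r (u, x2, x1)) ({..<K} \<times> UNIV)
      + ent (\<lambda>(x2, x1). \<Sum>u<K. r (u, x2, x1)) (UNIV \<times> UNIV)"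
    by (rule ent_submodular) (auto simp: r_def intro: pJ_nonneg[OF assms])
  moreover have "ent r ({..<K} \<times> UNIV \<times> UNIV) = H12U p K q"
    unfolding H12U_def by (rule ent_reindex_bij_betw[of "\<lambda>(u, x2, x1). (x1, x2, u)"])
      (auto simp: bij_betw_def inj_on_def image_def r_def)
  moreover have "(\<lambda>x1. \<Sum>u<K. \<Sum>x2\<in>UNIV. r (u, x2, x1)) = pX1 p"
    using sum_pJ_U[OF assms(2)] by (simp add: fun_eq_iff r_def pX1_def sum.swap[where A = "{..<K}"])
  moreover have "ent (\<lambda>(u, x1). \<Sum>x2\<in>UNIV. r (u, x2, x1)) ({..<K} \<times> UNIV) = ent (pX1U p q) (UNIV \<times> {..<K})"
    by (rule ent_reindex_bij_betw[of "\<lambda>(u, x1). (x1, u)"])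
      (auto simp: bij_betw_def inj_on_def image_def r_def pX1U_def)
  moreover have "ent (\<lambda>(x2, x1). \<Sum>u<K. r (u, x2, x1)) (UNIV \<times> UNIV) = H12 p"
    unfolding H12_def by (rule ent_reindex_bij_betw[of "\<lambda>(x2, x1). (x1, x2)"])
      (auto simp: bij_betw_def inj_on_def image_def r_def sum_pJ_U[OF assms(2)])
  ultimately show ?thesis
    unfolding I12_U_def H1_given_U_def H1_def by simp
qed

lemma H2_le_I12_U_add_H2_given_U:
  assumes "is_pmf2 p" "is_cond_pmf K q"
  shows "H2 p \<le> I12_U p K q + H2_given_U p K q"
proof -
  define r where "r = (\<lambda>(u, x1, x2). pJ p q (x1, x2, u))"
  have "ent r ({..<K} \<times> UNIV \<times> UNIV) + ent (\<lambda>x2. \<Sum>u<K. \<Sum>x1\<in>UNIV. r (u, x1, x2)) UNIV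
     \<le> ent (\<lambda>(u, x2). \<Sum>x1\<in>UNIV. r (u, x1, x2)) ({..<K} \<times> UNIV)
      + ent (\<lambda>(x1, x2). \<Sum>u<K. r (u, x1, x2)) (UNIV \<times> UNIV)"
    by (rule ent_submodular) (auto simp: r_def intro: pJ_nonneg[OF assms])
  moreover have "ent r ({..<K} \<times> UNIV \<times> UNIV) = H12U p K q"
    unfolding H12U_def by (rule ent_reindex_bij_betw[of "\<lambda>(u, x1, x2). (x1, x2, u)"])
      (auto simp: bij_betw_def inj_on_def image_def r_def)
  moreover have "(\<lambda>x2. \<Sum>u<K. \<Sum>x1\<in>UNIV. r (u, x1, x2)) = pX2 p"
    using sum_pJ_U[OF assms(2)] by (simp add: fun_eq_iff r_def pX2_def sum.swap[where A = "{..<K}"])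
  moreover have "ent (\<lambda>(u, x2). \<Sum>x1\<in>UNIV. r (u, x1, x2)) ({..<K} \<times> UNIV) = ent (pX2U p q) (UNIV \<times> {..<K})"
    by (rule ent_reindex_bij_betw[of "\<lambda>(u, x2). (x2, u)"])
      (auto simp: bij_betw_def inj_on_def image_def r_def pX2U_def)
  moreover have "ent (\<lambda>(x1, x2). \<Sum>u<K. r (u, x1, x2)) (UNIV \<times> UNIV) = H12 p"
    unfolding H12_def UNIV_Times_UNIV[symmetric]
    by (rule ent_cong) (auto simp: r_def sum_pJ_U[OF assms(2)])
  ultimately show ?thesis
    unfolding I12_U_def H2_given_U_def H2_def by simp
qed

text \<open>The joint pmfs of (X1, X2) that arise from a Markov chain X1 - U - X2 with U \<in> {..<K}:
  U \<sim> w, and given U = j the variables X1, X2 are independent with pmfs a j and b j.\<close>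
definition product_mixture ::
  "('a::finite \<times> 'b::finite \<Rightarrow> real) \<Rightarrow> nat \<Rightarrow> (nat \<Rightarrow> real) \<Rightarrow> (nat \<Rightarrow> 'a \<Rightarrow> real) \<Rightarrow> (nat \<Rightarrow> 'b \<Rightarrow> real) \<Rightarrow> bool"
  where "product_mixture p K w a b \<longleftrightarrow>
    (\<forall>j. 0 \<le> w j) \<and> (\<forall>j x. 0 \<le> a j x) \<and> (\<forall>j y. 0 \<le> b j y) \<and>
    (\<forall>j<K. sum (a j) UNIV = 1) \<and> (\<forall>j<K. sum (b j) UNIV = 1) \<and>
    (\<forall>x y. (\<Sum>j<K. w j * a j x * b j y) = p (x, y))"

context
  fixes p :: "'a::finite \<times> 'b::finite \<Rightarrow> real" and K q w a b
  assumes mixture: "product_mixture p K w a b"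
    and pJ_eq: "\<And>x1 x2 j. j < K \<Longrightarrow> pJ p q (x1, x2, j) = w j * a j x1 * b j x2"
begin

lemma pU_eq_weight: "j < K \<Longrightarrow> pU p q j = w j"
  using mixture unfolding pU_def product_mixture_def
  by (simp add: pJ_eq sum_distrib_left[symmetric] sum_distrib_right[symmetric] mult.assoc)

lemma pX1U_eq_weight: "j < K \<Longrightarrow> pX1U p q (x, j) = w j * a j x"
  using mixture unfolding pX1U_def product_mixture_def
  by (simp add: pJ_eq sum_distrib_left[symmetric])

lemma pX2U_eq_weight: "j < K \<Longrightarrow> pX2U p q (y, j) = w j * b j y"
  using mixture unfolding pX2U_def product_mixture_def
  by (simp add: pJ_eq sum_distrib_left[symmetric] sum_distrib_right[symmetric])

lemma markov_if_factorizes: "markov p K q"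
  unfolding markov_def by (simp add: pJ_eq pU_eq_weight pX1U_eq_weight pX2U_eq_weight)

lemma HU_eq_weight: "HU p K q = ent w {..<K}"
  unfolding HU_def by (rule ent_cong) (simp add: pU_eq_weight)

lemma H1_given_U_eq_mixture: "H1_given_U p K q = (\<Sum>j<K. w j * ent (a j) UNIV)"
proof -
  have "ent (pX1U p q) (UNIV \<times> {..<K}) = ent (\<lambda>(x, j). w j * a j x) (UNIV \<times> {..<K})"
    by (rule ent_cong) (auto simp: pX1U_eq_weight)
  also have "\<dots> = ent w {..<K} + (\<Sum>j<K. w j * ent (a j) UNIV)"
    using mixture unfolding product_mixture_def by (intro ent_chain_rule) auto
  finally show ?thesis
    unfolding H1_given_U_def HU_eq_weight by simp
qed

lemma H2_given_U_eq_mixture: "H2_given_U p K q = (\<Sum>j<K. w j * ent (b j) UNIV)"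
proof -
  have "ent (pX2U p q) (UNIV \<times> {..<K}) = ent (\<lambda>(y, j). w j * b j y) (UNIV \<times> {..<K})"
    by (rule ent_cong) (auto simp: pX2U_eq_weight)
  also have "\<dots> = ent w {..<K} + (\<Sum>j<K. w j * ent (b j) UNIV)"
    using mixture unfolding product_mixture_def by (intro ent_chain_rule) auto
  finally show ?thesis
    unfolding H2_given_U_def HU_eq_weight by simp
qed

lemma H12U_eq_mixture:
  "H12U p K q = ent w {..<K} + (\<Sum>j<K. w j * ent (a j) UNIV) + (\<Sum>j<K. w j * ent (b j) UNIV)"
proof -
  have w: "\<forall>j. 0 \<le> w j" and a: "\<forall>j x. 0 \<le> a j x" and b: "\<forall>j y. 0 \<le> b j y"
    and sa: "\<forall>j<K. sum (a j) UNIV = 1" and sb: "\<forall>j<K. sum (b j) UNIV = 1"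
    using mixture unfolding product_mixture_def by auto
  have "H12U p K q = ent (\<lambda>(x, (y, j)). (w j * b j y) * a j x) (UNIV \<times> UNIV \<times> {..<K})"
    unfolding H12U_def by (rule ent_cong) (auto simp: pJ_eq)
  also have "\<dots> = ent (\<lambda>(y, j). w j * b j y) (UNIV \<times> {..<K})
      + (\<Sum>(y, j)\<in>UNIV \<times> {..<K}. w j * b j y * ent (a j) UNIV)"
    using ent_chain_rule[of "UNIV \<times> {..<K}" "\<lambda>(y, j). w j * b j y" UNIV "\<lambda>(y, j). a j"] w a b sa
    by (force simp: case_prod_unfold)
  also have "ent (\<lambda>(y, j). w j * b j y) (UNIV \<times> {..<K}) = ent w {..<K} + (\<Sum>j<K. w j * ent (b j) UNIV)"
    using w b sb by (intro ent_chain_rule) auto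
  also have "(\<Sum>(y, j)\<in>UNIV \<times> {..<K}. w j * b j y * ent (a j) UNIV) = (\<Sum>j<K. w j * ent (a j) UNIV)"
    using sb
    by (simp add: sum.cartesian_product[symmetric] sum_distrib_right[symmetric] sum.swap[where A = UNIV]
        sum_distrib_left[symmetric] mult.commute mult.left_commute)
  finally show ?thesis by simp
qed

lemma I12_U_add_given_U_eq_H12: "I12_U p K q + H1_given_U p K q + H2_given_U p K q = H12 p"
  unfolding I12_U_def H12U_eq_mixture H1_given_U_eq_mixture H2_given_U_eq_mixture HU_eq_weight
  by simp

end

lemma sum_pX1U: "(\<Sum>x\<in>UNIV. pX1U p q (x, u)) = pU p q u"
  unfolding pX1U_def pU_def by simp

lemma sum_pX2U: "(\<Sum>y\<in>UNIV. pX2U p q (y, u)) = pU p q u"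
  unfolding pX2U_def pU_def by (subst sum.swap) simp

lemma pJ_eq_0_if_pU_eq_0:
  assumes "is_pmf2 p" "is_cond_pmf K q" "pU p q u = 0"
  shows "pJ p q (x1, x2, u) = 0"
proof -
  have "pJ p q (x1, x2, u) \<le> pU p q u"
    unfolding pU_def using pJ_nonneg[OF assms(1,2)]
    by (intro order.trans[OF _ member_le_sum[of x1 _ "\<lambda>x. \<Sum>y\<in>UNIV. pJ p q (x, y, u)"]]
        member_le_sum) (auto intro: sum_nonneg)
  with assms pJ_nonneg[OF assms(1,2)] show ?thesis
    by (simp add: order.antisym)
qed

lemma markov_imp_product_mixture:
  fixes p :: "'a::finite \<times> 'b::finite \<Rightarrow> real"
  assumes p: "is_pmf2 p" and q: "is_cond_pmf K q" and m: "markov p K q"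
  obtains w a b where "product_mixture p K w a b"
    and "\<And>x1 x2 j. j < K \<Longrightarrow> pJ p q (x1, x2, j) = w j * a j x1 * b j x2"
proof -
  define w where "w = pU p q"
  define a where "a j x = (if w j = 0 then 1 / real CARD('a) else pX1U p q (x, j) / w j)" for j x
  define b where "b j y = (if w j = 0 then 1 / real CARD('b) else pX2U p q (y, j) / w j)" for j y
  have pJ: "0 \<le> pJ p q s" for s
    using p q by (rule pJ_nonneg)
  have w: "0 \<le> w j" for j
    unfolding w_def pU_def by (intro sum_nonneg pJ)
  have a: "0 \<le> a j x" for j x
    unfolding a_def pX1U_def using w by (auto intro!: sum_nonneg divide_nonneg_nonneg pJ)
  have b: "0 \<le> b j y" for j y
    unfolding b_def pX2U_def using w by (auto intro!: sum_nonneg divide_nonneg_nonneg pJ)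
  have sa: "sum (a j) UNIV = 1" for j
    unfolding a_def by (cases "w j = 0") (simp_all add: sum_divide_distrib[symmetric] sum_pX1U w_def)
  have sb: "sum (b j) UNIV = 1" for j
    unfolding b_def by (cases "w j = 0") (simp_all add: sum_divide_distrib[symmetric] sum_pX2U w_def)
  have pJ_eq: "pJ p q (x1, x2, j) = w j * a j x1 * b j x2" if "j < K" for x1 x2 j
  proof (cases "w j = 0")
    case True
    then show ?thesis
      using pJ_eq_0_if_pU_eq_0[OF p q] unfolding w_def by simp
  next
    case False
    then show ?thesis
      using m that unfolding markov_def a_def b_def w_def by (simp add: field_simps)
  qed
  have "(\<Sum>j<K. w j * a j x * b j y) = p (x, y)" for x y
    using sum_pJ_U[OF q, of p x y] pJ_eq by simp
  with w a b sa sb pJ_eq show ?thesis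
    by (intro that) (auto simp: product_mixture_def)
qed

lemma product_mixture_imp_cond_pmf:
  fixes p :: "'a::finite \<times> 'b::finite \<Rightarrow> real"
  assumes p: "is_pmf2 p" and mixture: "product_mixture p K w a b" and K: "0 < K"
  obtains q where "is_cond_pmf K q"
    and "\<And>x1 x2 j. j < K \<Longrightarrow> pJ p q (x1, x2, j) = w j * a j x1 * b j x2"
proof -
  have summand: "0 \<le> w j * a j x1 * b j x2" for j x1 x2
    using mixture unfolding product_mixture_def by simp
  have sum_term: "(\<Sum>j<K. w j * a j x1 * b j x2) = p (x1, x2)" for x1 x2
    using mixture unfolding product_mixture_def by simp
  define q where "q x1 x2 j =
    (if p (x1, x2) = 0 then (if j = 0 then 1 else 0) else w j * a j x1 * b j x2 / p (x1, x2))" for x1 x2 j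
  have "is_cond_pmf K q"
    unfolding is_cond_pmf_def
  proof (intro conjI allI)
    show "0 \<le> q x1 x2 j" for x1 x2 j
      using p summand unfolding q_def is_pmf2_def by auto
    show "(\<Sum>j<K. q x1 x2 j) = 1" for x1 x2
      using K sum_term[of x1 x2] by (cases "p (x1, x2) = 0") (simp_all add: q_def sum_divide_distrib[symmetric])
  qed
  moreover have "pJ p q (x1, x2, j) = w j * a j x1 * b j x2" if "j < K" for x1 x2 j
  proof (cases "p (x1, x2) = 0")
    case True
    then have "w j * a j x1 * b j x2 = 0"
      using that sum_term[of x1 x2] sum_nonneg_eq_0_iff[of "{..<K}", OF _ summand] by auto
    with True show ?thesis
      unfolding pJ_def q_def by simp
  qed (simp add: pJ_def q_def)
  ultimately show ?thesis
    by (rule that)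
qed

text \<open>U = (X1, X2) always satisfies X1 - U - X2.\<close>
lemma product_mixture_exists:
  fixes p :: "'a::finite \<times> 'b::finite \<Rightarrow> real"
  assumes p: "is_pmf2 p"
  obtains K w a b where "0 < K" and "product_mixture p K w a b"
proof -
  define K where "K = CARD('a \<times> 'b)"
  obtain e where e: "bij_betw e {..<K} (UNIV :: ('a \<times> 'b) set)"
    unfolding K_def by (metis ex_bij_betw_nat_finite lessThan_atLeast0 finite)
  define w where "w j = p (e j)" for j
  define a :: "nat \<Rightarrow> 'a \<Rightarrow> real" where "a j x = (if x = fst (e j) then 1 else 0)" for j x
  define b :: "nat \<Rightarrow> 'b \<Rightarrow> real" where "b j y = (if y = snd (e j) then 1 else 0)" for j y
  have "(\<Sum>j<K. w j * a j x * b j y) = p (x, y)" for x y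
  proof -
    have "(\<Sum>j<K. w j * a j x * b j y) = (\<Sum>j<K. (\<lambda>z. if z = (x, y) then p z else 0) (e j))"
      unfolding w_def a_def b_def by (intro sum.cong) (auto simp: prod_eq_iff)
    also have "\<dots> = (\<Sum>z\<in>UNIV. if z = (x, y) then p z else 0)"
      by (rule sum.reindex_bij_betw[OF e])
    finally show ?thesis
      by simp
  qed
  moreover have "0 \<le> w j" for j
    using p unfolding is_pmf2_def w_def by blast
  moreover have "0 < K"
    unfolding K_def by simp
  ultimately show ?thesis
    by (intro that[of K w a b]) (auto simp: product_mixture_def a_def b_def)
qed

lemma convex_sum_caratheodory_hyperplane:
  fixes v :: "nat \<Rightarrow> 'v::euclidean_space"
  assumes w: "\<And>j. j < K \<Longrightarrow> 0 \<le> w j" and sw: "(\<Sum>j<K. w j) = 1"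
    and c: "c \<noteq> 0" and hyperplane: "\<And>j. j < K \<Longrightarrow> c \<bullet> v j = 1"
  obtains K' w' idx where "0 < K'" "K' \<le> DIM('v)" "\<And>j. 0 \<le> w' j" "\<And>j. j < K' \<Longrightarrow> idx j < K"
    "(\<Sum>j<K'. w' j *\<^sub>R v (idx j)) = (\<Sum>j<K. w j *\<^sub>R v j)"
proof -
  have "(\<Sum>j<K. w j *\<^sub>R v j) \<in> convex hull (v ` {..<K})"
    using w sw by (intro convex_sum) (auto intro: hull_inc)
  then obtain T u where T: "finite T" "T \<subseteq> v ` {..<K}" "int (card T) \<le> aff_dim (v ` {..<K}) + 1"
    and u: "\<forall>t\<in>T. 0 \<le> u t" "sum u T = 1" and sum_T: "(\<Sum>t\<in>T. u t *\<^sub>R t) = (\<Sum>j<K. w j *\<^sub>R v j)"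
    unfolding convex_hull_caratheodory_aff_dim by blast
  have "aff_dim (v ` {..<K}) \<le> aff_dim {y. c \<bullet> y = 1}"
    using hyperplane by (intro aff_dim_subset) auto
  also have "\<dots> = int DIM('v) - 1"
    using c by simp
  finally have card_T: "card T \<le> DIM('v)"
    using T(3) by linarith
  from T(1) u(2) have "0 < card T"
    by (auto simp: card_gt_0_iff)
  obtain e where e: "bij_betw e {..<card T} T"
    using ex_bij_betw_nat_finite[OF T(1)] by (metis atLeast0LessThan)
  define idx where "idx t = (SOME j. j < K \<and> v j = t)" for t
  have idx: "idx t < K \<and> v (idx t) = t" if "t \<in> T" for t
  proof -
    from T(2) that have "\<exists>j. j < K \<and> v j = t"
      by auto
    then show ?thesis
      unfolding idx_def by (rule someI_ex)
  qed
  have e_T: "e j \<in> T" if "j < card T" for j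
    using e that by (auto simp: bij_betw_def)
  define w' where "w' j = (if j < card T then u (e j) else 0)" for j
  have "(\<Sum>j<card T. w' j *\<^sub>R v (idx (e j))) = (\<Sum>j<card T. u (e j) *\<^sub>R e j)"
    unfolding w'_def by (intro sum.cong) (auto simp: idx e_T)
  also have "\<dots> = (\<Sum>j<K. w j *\<^sub>R v j)"
    using sum.reindex_bij_betw[OF e, of "\<lambda>t. u t *\<^sub>R t"] sum_T by simp
  finally show ?thesis
    using \<open>0 < card T\<close> card_T u(1) idx e_T
    by (intro that[of "card T" w' "idx \<circ> e"]) (auto simp: w'_def)
qed

lemma product_mixture_weights_sum:
  assumes p: "is_pmf2 p" and mixture: "product_mixture p K w a b"
  shows "(\<Sum>j<K. w j) = 1"
proof -
  have "(\<Sum>j<K. w j) = (\<Sum>j<K. w j * (sum (a j) UNIV * sum (b j) UNIV))"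
    using mixture unfolding product_mixture_def by (intro sum.cong) auto
  also have "\<dots> = (\<Sum>j<K. \<Sum>x\<in>UNIV. \<Sum>y\<in>UNIV. w j * a j x * b j y)"
    unfolding sum_product by (simp add: sum_distrib_left mult.assoc)
  also have "\<dots> = (\<Sum>x\<in>UNIV. \<Sum>y\<in>UNIV. \<Sum>j<K. w j * a j x * b j y)"
    by (subst sum.swap) (simp add: sum.swap[where A = "{..<K}"])
  also have "\<dots> = sum p UNIV"
    using mixture unfolding product_mixture_def
    by (simp add: sum.cartesian_product' UNIV_Times_UNIV[symmetric] del: UNIV_Times_UNIV)
  finally show ?thesis
    using p unfolding is_pmf2_def by simp
qed

text \<open>By Carath\'eodory, the point (p, \<Sum> w H(a), \<Sum> w H(b)) is a
  convex combination of at most |X1| |X2| + 2 of the points (a j \<otimes> b j, H(a j), H(b j)),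
  which all lie in the hyperplane where the coordinates of the first component add up to 1.\<close>
lemma product_mixture_reduce:
  fixes p :: "'a::finite \<times> 'b::finite \<Rightarrow> real"
  assumes p: "is_pmf2 p" and mixture: "product_mixture p K w a b"
  obtains K' w' a' b' where "0 < K'" "K' \<le> CARD('a) * CARD('b) + 2" "product_mixture p K' w' a' b'"
    "(\<Sum>j<K'. w' j * ent (a' j) UNIV) = (\<Sum>j<K. w j * ent (a j) UNIV)"
    "(\<Sum>j<K'. w' j * ent (b' j) UNIV) = (\<Sum>j<K. w j * ent (b j) UNIV)"
proof -
  have w: "\<forall>j. 0 \<le> w j" and a: "\<forall>j x. 0 \<le> a j x" and b: "\<forall>j y. 0 \<le> b j y"
    and sa: "\<forall>j<K. sum (a j) UNIV = 1" and sb: "\<forall>j<K. sum (b j) UNIV = 1"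
    and sum_p: "\<forall>x y. (\<Sum>j<K. w j * a j x * b j y) = p (x, y)"
    using mixture unfolding product_mixture_def by auto
  define v :: "nat \<Rightarrow> (real ^ ('a \<times> 'b)) \<times> real \<times> real" where
    "v j = (\<chi> z. a j (fst z) * b j (snd z), ent (a j) UNIV, ent (b j) UNIV)" for j
  define c :: "(real ^ ('a \<times> 'b)) \<times> real \<times> real" where "c = (\<chi> z. 1, 0, 0)"
  have "c \<noteq> 0"
    by (auto simp: c_def vec_eq_iff zero_prod_def)
  moreover have "c \<bullet> v j = 1" if "j < K" for j
    using sa sb that
    by (simp add: c_def v_def inner_vec_def sum_product[symmetric] sum.cartesian_product'
        UNIV_Times_UNIV[symmetric] del: UNIV_Times_UNIV)
  ultimately obtain K' w' idx where K': "0 < K'" "K' \<le> DIM((real ^ ('a \<times> 'b)) \<times> real \<times> real)"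
    and w': "\<And>j. 0 \<le> w' j" and idx: "\<And>j. j < K' \<Longrightarrow> idx j < K"
    and sum_v: "(\<Sum>j<K'. w' j *\<^sub>R v (idx j)) = (\<Sum>j<K. w j *\<^sub>R v j)"
    using convex_sum_caratheodory_hyperplane[of K w c v] w product_mixture_weights_sum[OF p mixture]
    by blast
  define a' where "a' j = a (idx j)" for j
  define b' where "b' j = b (idx j)" for j
  have "(\<Sum>j<K'. w' j * a' j x * b' j y) = p (x, y)" for x y
    using arg_cong[OF sum_v, of "\<lambda>s. fst s $ (x, y)"] sum_p
    by (simp add: v_def a'_def b'_def fst_sum mult.assoc)
  then have "product_mixture p K' w' a' b'"
    using w' a b sa sb idx unfolding product_mixture_def a'_def b'_def by auto
  moreover have "(\<Sum>j<K'. w' j * ent (a' j) UNIV) = (\<Sum>j<K. w j * ent (a j) UNIV)"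
    using arg_cong[OF sum_v, of "\<lambda>s. fst (snd s)"] by (simp add: v_def a'_def fst_sum snd_sum)
  moreover have "(\<Sum>j<K'. w' j * ent (b' j) UNIV) = (\<Sum>j<K. w j * ent (b j) UNIV)"
    using arg_cong[OF sum_v, of "\<lambda>s. snd (snd s)"] by (simp add: v_def b'_def snd_sum)
  ultimately show ?thesis
    using K' by (intro that[of K' w' a' b']) auto
qed

lemma R_LB_eq_max:
  "R_LB p M = max (H12 p - 2 * M) (max ((H12 p - M) / 2) ((H12 p + max (H1 p) (H2 p)) / 2 - M))"
proof -
  have "{R. R \<ge> H12 p - 2 * M \<and> R \<ge> (H12 p - M) / 2 \<and> R \<ge> (H12 p + max (H1 p) (H2 p)) / 2 - M}
      = {max (H12 p - 2 * M) (max ((H12 p - M) / 2) ((H12 p + max (H1 p) (H2 p)) / 2 - M))..}"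
    by auto
  then show ?thesis
    unfolding R_LB_def by simp
qed

lemma R_GW_U_eq_max:
  "R_GW_U p M K q =
    (let I = I12_U p K q; A = H1_given_U p K q; B = H2_given_U p K q in
      max (I + A + B - 2 * M) (max ((I + A + B - M) / 2) (max (I + A + B / 2 - M) (I + A / 2 + B - M))))"
proof -
  have upper_bounds: "{R. R \<ge> t1 \<and> R \<ge> t2 \<and> R \<ge> t3 \<and> R \<ge> t4} = {max t1 (max t2 (max t3 t4))..}"
    for t1 t2 t3 t4 :: real
    by auto
  show ?thesis
    unfolding R_GW_U_def Let_def upper_bounds by simp
qed

lemma R_LB_le_R_GW_U:
  assumes "is_pmf2 p" "is_cond_pmf K q"
  shows "R_LB p M \<le> R_GW_U p M K q"
  using H12_le_I12_U_add_given_U[OF assms] H1_le_I12_U_add_H1_given_U[OF assms]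
    H2_le_I12_U_add_H2_given_U[OF assms]
  unfolding R_LB_eq_max R_GW_U_eq_max Let_def max_def by argo

lemma R_LB_le_R_GW:
  assumes p: "is_pmf2 p"
  shows "R_LB p M \<le> R_GW p M"
proof -
  have "is_cond_pmf 1 (\<lambda>_ _ _. 1)"
    unfolding is_cond_pmf_def by simp
  then have "R_GW_U p M 1 (\<lambda>_ _ _. 1) \<in> {R_GW_U p M K q | K q.
      is_cond_pmf K q \<and> K \<le> card (UNIV :: 'a set) * card (UNIV :: 'b set) + 2}"
    by force
  then show ?thesis
    unfolding R_GW_def using R_LB_le_R_GW_U[OF p] by (intro cInf_greatest) auto
qed

lemma markov_imp_I12_U_add_given_U_eq_H12:
  assumes "is_pmf2 p" "is_cond_pmf K q" "markov p K q"
  shows "I12_U p K q + H1_given_U p K q + H2_given_U p K q = H12 p"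
  using assms by (metis markov_imp_product_mixture I12_U_add_given_U_eq_H12)

lemma R_GW_le_markov:
  fixes p :: "'a::finite \<times> 'b::finite \<Rightarrow> real"
  assumes p: "is_pmf2 p" and q: "is_cond_pmf K q" and m: "markov p K q"
  shows "R_GW p M \<le> max (H12 p - 2 * M)
    (max ((H12 p - M) / 2) (H12 p - min (H1_given_U p K q) (H2_given_U p K q) / 2 - M))"
proof -
  obtain w a b where mixture: "product_mixture p K w a b"
    and "\<And>x1 x2 j. j < K \<Longrightarrow> pJ p q (x1, x2, j) = w j * a j x1 * b j x2"
    using markov_imp_product_mixture[OF p q m] by blast
  then have A: "H1_given_U p K q = (\<Sum>j<K. w j * ent (a j) UNIV)"
    and B: "H2_given_U p K q = (\<Sum>j<K. w j * ent (b j) UNIV)"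
    by (simp_all add: H1_given_U_eq_mixture H2_given_U_eq_mixture)
  obtain K' w' a' b' where K': "0 < K'" "K' \<le> CARD('a) * CARD('b) + 2"
    and mixture': "product_mixture p K' w' a' b'"
    and A': "(\<Sum>j<K'. w' j * ent (a' j) UNIV) = H1_given_U p K q"
    and B': "(\<Sum>j<K'. w' j * ent (b' j) UNIV) = H2_given_U p K q"
    using product_mixture_reduce[OF p mixture] unfolding A B by blast
  obtain q' where q': "is_cond_pmf K' q'"
    and pJ': "\<And>x1 x2 j. j < K' \<Longrightarrow> pJ p q' (x1, x2, j) = w' j * a' j x1 * b' j x2"
    using product_mixture_imp_cond_pmf[OF p mixture' K'(1)] by blast
  have "R_GW p M \<le> R_GW_U p M K' q'"
    unfolding R_GW_def using q' K'(2) R_LB_le_R_GW_U[OF p]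
    by (intro cInf_lower bdd_belowI) auto
  also have "\<dots> = max (H12 p - 2 * M)
      (max ((H12 p - M) / 2) (H12 p - min (H1_given_U p K q) (H2_given_U p K q) / 2 - M))"
  proof -
    have "H1_given_U p K' q' = H1_given_U p K q" "H2_given_U p K' q' = H2_given_U p K q"
      using H1_given_U_eq_mixture[OF mixture' pJ'] H2_given_U_eq_mixture[OF mixture' pJ'] A' B'
      by simp_all
    moreover have "I12_U p K' q' = H12 p - H1_given_U p K q - H2_given_U p K q"
      using I12_U_add_given_U_eq_H12[OF mixture' pJ'] calculation by simp
    ultimately show ?thesis
      unfolding R_GW_U_eq_max Let_def by (auto simp: max_def min_def)
  qed
  finally show ?thesis .
qed

lemma markov_near_M1:
  assumes p: "is_pmf2 p" and e: "0 < e"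
  obtains K q where "is_cond_pmf K q" "markov p K q"
    "M1 p - e < min (H1_given_U p K q) (H2_given_U p K q) / 2"
proof -
  define S where "S = {min (H1_given_U p K q) (H2_given_U p K q) / 2 | K q.
    is_cond_pmf K q \<and> markov p K q}"
  obtain K w a b where "0 < K" "product_mixture p K w a b"
    using product_mixture_exists[OF p] .
  then obtain q where "is_cond_pmf K q" "markov p K q"
    using product_mixture_imp_cond_pmf[OF p] markov_if_factorizes by metis
  then have "S \<noteq> {}"
    unfolding S_def by blast
  moreover have "bdd_above S"
  proof (rule bdd_aboveI)
    fix s
    assume "s \<in> S"
    then obtain K q where s: "s = min (H1_given_U p K q) (H2_given_U p K q) / 2"
      and q: "is_cond_pmf K q" "markov p K q"
      unfolding S_def by blast
    have "min (H1_given_U p K q) (H2_given_U p K q) \<le> H12 p - H1 p"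
      using markov_imp_I12_U_add_given_U_eq_H12[OF p q] H1_le_I12_U_add_H1_given_U[OF p q(1)]
        min.cobounded2[of "H1_given_U p K q" "H2_given_U p K q"]
      by linarith
    then show "s \<le> (H12 p - H1 p) / 2"
      unfolding s by (simp add: field_simps)
  qed
  ultimately have "\<exists>s\<in>S. M1 p - e < s"
    using e unfolding M1_def S_def[symmetric] by (intro less_cSupD) auto
  then show ?thesis
    unfolding S_def using that by blast
qed

lemma R_GW_le_M1:
  assumes p: "is_pmf2 p"
  shows "R_GW p M \<le> max (H12 p - 2 * M) (max ((H12 p - M) / 2) (H12 p - M1 p - M))"
proof (rule field_le_epsilon)
  fix e :: real
  assume "0 < e"
  then obtain K q where q: "is_cond_pmf K q" "markov p K q"
    and close: "M1 p - e < min (H1_given_U p K q) (H2_given_U p K q) / 2"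
    using markov_near_M1[OF p] by blast
  have bound: "max (H12 p - 2 * M) (max ((H12 p - M) / 2) (H12 p - m - M))
      \<le> max (H12 p - 2 * M) (max ((H12 p - M) / 2) (H12 p - M1 p - M)) + e" if "M1 p - e < m" for m
    using that \<open>0 < e\<close> unfolding max_def by (auto simp: field_simps)
  show "R_GW p M \<le> max (H12 p - 2 * M) (max ((H12 p - M) / 2) (H12 p - M1 p - M)) + e"
    using R_GW_le_markov[OF p q, of M] bound[OF close] by (rule order.trans)
qed

theorem theorem3:
  fixes p :: "'a::finite \<times> 'b::finite \<Rightarrow> real" and M :: real
  assumes "is_pmf2 p"
    and "M \<in> {0 .. M1 p} \<union> {H12 p - 2 * M1 p .. H12 p}"
  shows "R_GW p M = R_LB p M"
proof -
  have "R_GW p M \<le> max (H12 p - 2 * M) (max ((H12 p - M) / 2) (H12 p - M1 p - M))"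
    using assms(1) by (rule R_GW_le_M1)
  also have "\<dots> = max (H12 p - 2 * M) ((H12 p - M) / 2)"
    using assms(2) unfolding max_def by (auto simp: field_simps)
  also have "\<dots> \<le> R_LB p M"
    unfolding R_LB_eq_max by (rule max.mono) simp_all
  finally show ?thesis
    using R_LB_le_R_GW[OF assms(1), of M] by (rule order.antisym)
qed

end
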